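(* Let $K\ge 3$, $T\subseteq[K]$ with $|T|=N$, let ${\bm{x}}_1,\dots,{\bm{x}}_K\in\mathbb{R}^d$ and $z_1,\dots,z_K\in\mathbb{R}$, and suppose there is ${\bm{a}}\in\mathbb{R}^d$ with ${\bm{a}}^T{\bm{x}}_1 < {\bm{a}}^T{\bm{x}}_2 < \cdots < {\bm{a}}^T{\bm{x}}_K$. Then there exist $m$ with $$ m \le K-1-\sum_{P\in\mathcal{P}([K]\setminus T)} \max\{|P|-2,0\}$$ and parameters ${\bm{W}}_2\in\mathbb{R}^{1\times m}$, ${\bm{b}}_1\in\mathbb{R}^m$, $b_2\in\mathbb{R}$ such that the network $g({\bm{x}}) = {\bm{W}}_2\sigma(\mathbf{1}_m{\bm{a}}^T{\bm{x}} + {\bm{b}}_1)+b_2$ satisfies $g({\bm{x}}_i)=z_i$ for all $i\in T$ and $g({\bm{x}}_i)=0$ for all $i\in[K]\setminus T$.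
   Context: $[K]=\{1,\dots,K\}$; $\sigma(t)=\max\{t,0\}$ applied coordinatewise; $\mathbf{1}_m\in\mathbb{R}^m$ is the all-ones vector. For $I\subseteq[K]$, the consecutive partition $\mathcal{P}(I)$ is the partition of $I$ into maximal subsets of consecutive integers (e.g. $\mathcal{P}(\{1,2,3,5,6,8,10,11,12,13\}) = \{\{1,2,3\},\{5,6\},\{8\},\{10,11,12,13\}\}$). *)

theory Defs
  imports "HOL-Analysis.Analysis"
begin

definition consec_partition :: "nat set \<Rightarrow> nat set set" where
  "consec_partition I =
     {{l..u} | l u. l \<le> u \<and> {l..u} \<subseteq> I \<and> (0 < l \<longrightarrow> l - 1 \<notin> I) \<and> Suc u \<notin> I}"

definition relu :: "real \<Rightarrow> real" where
  "relu t = max t 0"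

definition net :: "nat \<Rightarrow> (nat \<Rightarrow> real) \<Rightarrow> (nat \<Rightarrow> real) \<Rightarrow> real \<Rightarrow> ('a::real_inner) \<Rightarrow> 'a \<Rightarrow> real" where
  "net m W2 b1 b2 a x = (\<Sum>j<m. W2 j * relu (a \<bullet> x + b1 j)) + b2"

end

theory Submission
  imports Defs
begin

text \<open>
  Along the direction \<open>a\<close> the data points become reals \<open>t\<^sub>1 < \<dots> < t\<^sub>K\<close>, and the
  piecewise linear interpolant of the targets is \<open>y\<^sub>1 + \<Sum>\<^sub>j c\<^sub>j \<sigma>(t - t\<^sub>j)\<close>, where \<open>c\<^sub>j\<close>
  is the change of slope at \<open>t\<^sub>j\<close>: one neuron per breakpoint \<open>t\<^sub>1, \<dots>, t\<^sub>K\<^sub>-\<^sub>1\<close>.  At a point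
  whose two neighbours also carry target \<open>0\<close> the slope does not change, so that neuron can
  be dropped; a block of \<open>n\<close> consecutive indices outside \<open>T\<close> has \<open>max (n - 2) 0\<close> such
  interior points.
\<close>

definition slope :: "(nat \<Rightarrow> real) \<Rightarrow> (nat \<Rightarrow> real) \<Rightarrow> nat \<Rightarrow> real" where
  "slope t y j = (y (Suc j) - y j) / (t (Suc j) - t j)"

text \<open>The slope to the left of \<open>t\<^sub>1\<close> is taken to be \<open>0\<close>.\<close>
definition kink :: "(nat \<Rightarrow> real) \<Rightarrow> (nat \<Rightarrow> real) \<Rightarrow> nat \<Rightarrow> real" where
  "kink t y j = slope t y j - (if j \<le> 1 then 0 else slope t y (j - 1))"

lemma sum_kink: "1 \<le> i \<Longrightarrow> (\<Sum>j\<in>{1..i}. kink t y j) = slope t y i"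
  by (induction i rule: dec_induct) (simp_all add: kink_def)

lemma kink_eq_0:
  assumes "y (j - 1) = 0" "y j = 0" "y (Suc j) = 0"
  shows "kink t y j = 0"
  using assms by (simp add: kink_def slope_def)

lemma kink_linear_interpolation:
  assumes "\<And>j. 1 \<le> j \<Longrightarrow> j < i \<Longrightarrow> t j \<noteq> t (Suc j)" "1 \<le> i"
  shows "y 1 + (\<Sum>j\<in>{1..<i}. kink t y j * (t i - t j)) = y i"
  using assms(2,1)
proof (induction i rule: dec_induct)
  case base
  then show ?case by simp
next
  case (step n)
  have "(\<Sum>j\<in>{1..<Suc n}. kink t y j * (t (Suc n) - t j))
      = (t (Suc n) - t n) * (\<Sum>j\<in>{1..n}. kink t y j) + (\<Sum>j\<in>{1..<Suc n}. kink t y j * (t n - t j))"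
    by (simp add: atLeastLessThanSuc_atLeastAtMost sum_distrib_left sum.distrib[symmetric]
        algebra_simps)
  also have "(\<Sum>j\<in>{1..<Suc n}. kink t y j * (t n - t j)) = (\<Sum>j\<in>{1..<n}. kink t y j * (t n - t j))"
    using step.hyps by (simp add: sum.atLeastLessThan_Suc)
  also have "(\<Sum>j\<in>{1..n}. kink t y j) = slope t y n"
    using step.hyps(1) by (rule sum_kink)
  also have "(t (Suc n) - t n) * slope t y n = y (Suc n) - y n"
    using step.prems[of n] step.hyps(1) by (simp add: slope_def)
  finally show ?case
    using step by simp
qed

lemma strict_mono_on_atLeastAtMostI:
  fixes t :: "nat \<Rightarrow> 'a::order"
  assumes "\<And>n. l \<le> n \<Longrightarrow> n < u \<Longrightarrow> t n < t (Suc n)"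
  shows "strict_mono_on {l..u} t"
proof (rule strict_mono_onI)
  fix j k
  assume "j \<in> {l..u}" "k \<in> {l..u}" "j < k"
  from \<open>j < k\<close> \<open>j \<in> {l..u}\<close> \<open>k \<in> {l..u}\<close> show "t j < t k"
    by (induction j k rule: less_Suc_induct) (auto intro: assms order.strict_trans)
qed

lemma relu_interpolation:
  assumes "strict_mono_on {1..K} t" "1 \<le> i" "i \<le> K"
  shows "y 1 + (\<Sum>j\<in>{1..<K}. kink t y j * relu (t i - t j)) = y i"
proof -
  have less: "t j < t k" if "1 \<le> j" "j < k" "k \<le> K" for j k
    using that by (intro strict_mono_onD[OF assms(1)]) auto
  have "(\<Sum>j\<in>{1..<K}. kink t y j * relu (t i - t j)) = (\<Sum>j\<in>{1..<i}. kink t y j * relu (t i - t j))"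
  proof (rule sum.mono_neutral_right)
    have "relu (t i - t j) = 0" if "i \<le> j" "j < K" for j
      using assms(2) that less[of i j] by (cases "i = j") (auto simp: relu_def)
    then show "\<forall>j\<in>{1..<K} - {1..<i}. kink t y j * relu (t i - t j) = 0"
      by auto
  qed (use assms(3) in auto)
  also have "\<dots> = (\<Sum>j\<in>{1..<i}. kink t y j * (t i - t j))"
    by (rule sum.cong) (use assms(3) less in \<open>auto simp: relu_def\<close>)
  finally show ?thesis
    using kink_linear_interpolation[of i t y] less assms(2,3) by force
qed

text \<open>The guard \<open>0 < j\<close> keeps \<open>0\<close> out, since \<open>0 - 1 = 0\<close> on \<^typ>\<open>nat\<close>.\<close>
definition interior_points :: "nat set \<Rightarrow> nat set" where
  "interior_points I = {j. 0 < j \<and> j - 1 \<in> I \<and> j \<in> I \<and> Suc j \<in> I}"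

lemma interior_points_subset: "interior_points I \<subseteq> I"
  by (auto simp: interior_points_def)

lemma interior_points_mono: "I \<subseteq> I' \<Longrightarrow> interior_points I \<subseteq> interior_points I'"
  by (auto simp: interior_points_def)

lemma interior_points_subset_atLeastLessThan:
  "I \<subseteq> {1..K} \<Longrightarrow> interior_points I \<subseteq> {1..<K}"
  by (auto simp: interior_points_def)

lemma interior_points_atLeastAtMost: "interior_points {l..u} = {l<..<u}"
  by (auto simp: interior_points_def)

lemma card_interior_points_atLeastAtMost:
  "int (card (interior_points {l..u})) = max (int (card {l..u}) - 2) 0"
  by (simp add: interior_points_atLeastAtMost)

lemma consec_partitionE:
  assumes "P \<in> consec_partition I"
  obtains l u where "P = {l..u}" "l \<le> u" "{l..u} \<subseteq> I" "0 < l \<Longrightarrow> l - 1 \<notin> I" "Suc u \<notin> I"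
  using assms unfolding consec_partition_def by blast

lemma consec_partition_disjoint:
  assumes "P \<in> consec_partition I" "Q \<in> consec_partition I" "P \<noteq> Q"
  shows "P \<inter> Q = {}"
proof (rule ccontr)
  assume "P \<inter> Q \<noteq> {}"
  then obtain j where "j \<in> P" "j \<in> Q"
    by blast
  have left: "l' \<le> l" if "{l..u} \<subseteq> I" "0 < l' \<Longrightarrow> l' - 1 \<notin> I" "l' \<le> u" for l u l' :: nat
  proof (rule ccontr)
    assume "\<not> l' \<le> l"
    then have "l' - 1 \<in> {l..u}"
      using that(3) by auto
    then show False
      using that(1,2) \<open>\<not> l' \<le> l\<close> by auto
  qed
  have right: "u \<le> u'" if "{l..u} \<subseteq> I" "Suc u' \<notin> I" "l \<le> u'" for l u u' :: nat
    using that subsetD[OF that(1), of "Suc u'"] by (cases "u' < u") auto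
  obtain l u where P: "P = {l..u}" "{l..u} \<subseteq> I" "0 < l \<Longrightarrow> l - 1 \<notin> I" "Suc u \<notin> I"
    using assms(1) by (blast elim: consec_partitionE)
  obtain l' u' where Q: "Q = {l'..u'}" "{l'..u'} \<subseteq> I" "0 < l' \<Longrightarrow> l' - 1 \<notin> I" "Suc u' \<notin> I"
    using assms(2) by (blast elim: consec_partitionE)
  have "l = l'" "u = u'"
    using left[OF P(2) Q(3)] left[OF Q(2) P(3)] right[OF P(2) Q(4)] right[OF Q(2) P(4)]
      \<open>j \<in> P\<close> \<open>j \<in> Q\<close> P(1) Q(1) by auto
  then show False
    using P(1) Q(1) assms(3) by simp
qed

lemma sum_consec_partition_le_card_interior_points:
  assumes "finite I"
  shows "(\<Sum>P\<in>consec_partition I. max (int (card P) - 2) 0) \<le> int (card (interior_points I))"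
proof -
  have fin: "finite (consec_partition I)"
    by (rule finite_subset[of _ "Pow I"]) (auto simp: consec_partition_def assms)
  have "(\<Sum>P\<in>consec_partition I. max (int (card P) - 2) 0)
      = (\<Sum>P\<in>consec_partition I. int (card (interior_points P)))"
    by (rule sum.cong) (auto elim!: consec_partitionE simp: card_interior_points_atLeastAtMost)
  also have "\<dots> = int (card (\<Union>P\<in>consec_partition I. interior_points P))"
  proof (subst card_UN_disjoint)
    show "\<forall>P\<in>consec_partition I. \<forall>Q\<in>consec_partition I. P \<noteq> Q \<longrightarrow>
        interior_points P \<inter> interior_points Q = {}"
      using consec_partition_disjoint interior_points_subset by blast
  qed (use fin in \<open>auto elim!: consec_partitionE simp: interior_points_atLeastAtMost\<close>)
  also have "\<dots> \<le> int (card (interior_points I))"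
    using interior_points_mono finite_subset[OF interior_points_subset assms]
    by (auto intro!: card_mono simp: consec_partition_def)
  finally show ?thesis .
qed

lemma relu_interpolation_sparse:
  assumes "strict_mono_on {1..K} t" "1 \<le> i" "i \<le> K" "\<And>j. j \<in> I \<Longrightarrow> y j = 0"
  shows "y 1 + (\<Sum>j\<in>{1..<K} - interior_points I. kink t y j * relu (t i - t j)) = y i"
proof -
  have "(\<Sum>j\<in>{1..<K} - interior_points I. kink t y j * relu (t i - t j))
      = (\<Sum>j\<in>{1..<K}. kink t y j * relu (t i - t j))"
    by (rule sum.mono_neutral_left) (auto simp: interior_points_def assms(4) intro: kink_eq_0)
  then show ?thesis
    using relu_interpolation[OF assms(1-3)] by simp
qed

lemma ex_net_eq_sum:
  assumes "finite J"
  obtains W2 b1 where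
    "\<And>v. net (card J) W2 b1 b2 a v = (\<Sum>j\<in>J. w j * relu (a \<bullet> v + \<beta> j)) + b2"
proof -
  obtain e where e: "bij_betw e {..<card J} J"
    using ex_bij_betw_nat_finite[OF assms] by (auto simp: atLeast0LessThan)
  show ?thesis
    by (rule that[of "w \<circ> e" "\<beta> \<circ> e"])
      (simp add: net_def sum.reindex_bij_betw[OF e, of "\<lambda>j. w j * relu (a \<bullet> _ + \<beta> j)"])
qed

lemma relu_net_interpolation:
  fixes x :: "nat \<Rightarrow> 'a::real_inner"
  assumes "strict_mono_on {1..K} (\<lambda>i. a \<bullet> x i)" "I \<subseteq> {1..K}" "\<And>j. j \<in> I \<Longrightarrow> y j = 0"
  obtains W2 b1 where
    "\<And>i. i \<in> {1..K} \<Longrightarrow> net (K - 1 - card (interior_points I)) W2 b1 (y 1) a (x i) = y i"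
proof -
  define t where "t = (\<lambda>i. a \<bullet> x i)"
  define J where "J = {1..<K} - interior_points I"
  have t_mono: "strict_mono_on {1..K} t"
    using assms(1) by (simp add: t_def)
  have "card J = K - 1 - card (interior_points I)"
    using interior_points_subset_atLeastLessThan[OF assms(2)]
    by (simp add: J_def card_Diff_subset finite_subset)
  moreover obtain W2 b1 where net_J:
    "\<And>v. net (card J) W2 b1 (y 1) a v = (\<Sum>j\<in>J. kink t y j * relu (a \<bullet> v + - t j)) + y 1"
    using ex_net_eq_sum[of J "y 1" a "kink t y" "\<lambda>j. - t j"] by (auto simp: J_def)
  moreover have "net (card J) W2 b1 (y 1) a (x i) = y i" if "i \<in> {1..K}" for i
  proof -
    have "y 1 + (\<Sum>j\<in>J. kink t y j * relu (t i - t j)) = y i"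
      unfolding J_def using that by (intro relu_interpolation_sparse[OF t_mono]) (auto simp: assms(3))
    then show ?thesis
      using net_J[of "x i"] by (simp add: t_def)
  qed
  ultimately show ?thesis
    using that by metis
qed

theorem theorem4p6:
  fixes K :: nat and T :: "nat set"
    and x :: "nat \<Rightarrow> real ^ 'd" and z :: "nat \<Rightarrow> real" and a :: "real ^ 'd"
  assumes "K \<ge> 3"
    and "T \<subseteq> {1..K}"
    and "\<And>i. 1 \<le> i \<Longrightarrow> i < K \<Longrightarrow> a \<bullet> x i < a \<bullet> x (Suc i)"
  shows "\<exists>m W2 b1 b2.
           int m \<le> int K - 1 - (\<Sum>P\<in>consec_partition ({1..K} - T). max (int (card P) - 2) 0)
         \<and> (\<forall>i\<in>T. net m W2 b1 b2 a (x i) = z i)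
         \<and> (\<forall>i\<in>{1..K} - T. net m W2 b1 b2 a (x i) = 0)"
proof -
  define y where "y i = (if i \<in> T then z i else 0)" for i
  define I where "I = {1..K} - T"
  define m where "m = K - 1 - card (interior_points I)"
  have mono: "strict_mono_on {1..K} (\<lambda>i. a \<bullet> x i)"
    using assms(3) by (rule strict_mono_on_atLeastAtMostI)
  have "I \<subseteq> {1..K}" "\<And>j. j \<in> I \<Longrightarrow> y j = 0"
    by (auto simp: I_def y_def)
  then obtain W2 b1 where fit: "\<And>i. i \<in> {1..K} \<Longrightarrow> net m W2 b1 (y 1) a (x i) = y i"
    using relu_net_interpolation[OF mono] unfolding m_def by blast
  have "card (interior_points I) \<le> K - 1"
    using card_mono[OF _ interior_points_subset_atLeastLessThan, of K I] by (auto simp: I_def)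
  moreover have "(\<Sum>P\<in>consec_partition I. max (int (card P) - 2) 0) \<le> int (card (interior_points I))"
    by (rule sum_consec_partition_le_card_interior_points) (simp add: I_def)
  ultimately have "int m \<le> int K - 1 - (\<Sum>P\<in>consec_partition I. max (int (card P) - 2) 0)"
    using assms(1) by (simp add: m_def of_nat_diff)
  moreover have "net m W2 b1 (y 1) a (x i) = z i" if "i \<in> T" for i
    using fit[of i] that assms(2) by (auto simp: y_def)
  moreover have "net m W2 b1 (y 1) a (x i) = 0" if "i \<in> {1..K} - T" for i
    using fit[of i] that by (auto simp: y_def)
  ultimately show ?thesis
    unfolding I_def by blast
qed

end
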